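(* Let $Y$ be a finite connected simple undirected graph with vertex set $\{1,\dots,n\}$, and let $\pi\in S_Y$. If $s,s'\in\{0,1,\dots,n-1\}$ with $s\neq s'$, then $[\boldsymbol{\sigma}_s(\pi)]_Y\neq[\boldsymbol{\sigma}_{s'}(\pi)]_Y$. Equivalently, for $g,g'\in C_n$ with $g\neq g'$ one has $[g\cdot\pi]_Y\neq[g'\cdot\pi]_Y$.
   Context: $S_Y$ denotes the set of permutations (total orders) $\pi=(\pi_1,\dots,\pi_n)$ of the vertex set of $Y$. The update graph $U(Y)$ has vertex set $S_Y$, two permutations being adjacent if they differ exactly by swapping two consecutive entries $\pi_k,\pi_{k+1}$ with $\{\pi_k,\pi_{k+1}\}$ not an edge of $Y$; $\pi\sim_Y\pi'$ iff $\pi,\pi'$ lie in the same connected component of $U(Y)$, and $[\pi]_Y$ denotes the class of $\pi$. Let $\sigma=(n,n-1,\dots,2,1)\in S_n$ (cycle notation) and $C_n=\langle\sigma\rangle$, acting on $S_Y$ by $g\cdot(\pi_1,\dots,\pi_n)=(\pi_{g^{-1}(1)},\dots,\pi_{g^{-1}(n)})$. Set $\boldsymbol{\sigma}_s(\pi)=\sigma^s\cdot\pi$; thus $\boldsymbol{\sigma}_1(\pi)=(\pi_2,\dots,\pi_n,\pi_1)$ is the cyclic left shift. *)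

theory Defs
  imports Main
begin

definition simple_graph :: "nat \<Rightarrow> nat set set \<Rightarrow> bool" where
  "simple_graph n E \<longleftrightarrow> (\<forall>e\<in>E. \<exists>u v. e = {u, v} \<and> u \<noteq> v \<and> u \<in> {1..n} \<and> v \<in> {1..n})"

definition graph_connected :: "nat \<Rightarrow> nat set set \<Rightarrow> bool" where
  "graph_connected n E \<longleftrightarrow>
     (\<forall>u\<in>{1..n}. \<forall>v\<in>{1..n}. (u, v) \<in> {(x, y). {x, y} \<in> E}\<^sup>*)"

text \<open>S_Y: permutations (total orders) of the vertex set, as lists
  (pi_1, ..., pi_n) = (xs!0, ..., xs!(n-1)).\<close>
definition perms_Y :: "nat \<Rightarrow> nat list set" where
  "perms_Y n = {xs. distinct xs \<and> set xs = {1..n}}"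

definition swap_adj :: "nat \<Rightarrow> 'a list \<Rightarrow> 'a list" where
  "swap_adj k xs = xs[k := xs ! Suc k, Suc k := xs ! k]"

definition update_edge :: "nat \<Rightarrow> nat set set \<Rightarrow> (nat list \<times> nat list) set" where
  "update_edge n E = {(p, q). p \<in> perms_Y n \<and>
     (\<exists>k. Suc k < n \<and> {p ! k, p ! Suc k} \<notin> E \<and> q = swap_adj k p)}"

definition update_equiv :: "nat \<Rightarrow> nat set set \<Rightarrow> nat list \<Rightarrow> nat list \<Rightarrow> bool" where
  "update_equiv n E p q \<longleftrightarrow> (p, q) \<in> ((update_edge n E) \<union> (update_edge n E)\<inverse>)\<^sup>*"

definition update_class :: "nat \<Rightarrow> nat set set \<Rightarrow> nat list \<Rightarrow> nat list set" where
  "update_class n E p = {q \<in> perms_Y n. update_equiv n E p q}"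

definition sigma_shift :: "nat \<Rightarrow> 'a list \<Rightarrow> 'a list" where
  "sigma_shift s xs = rotate s xs"

end

theory Submission
  imports Defs
begin

text \<open>Each permutation \<pi> induces an acyclic orientation of Y, directing every edge from the
  vertex occurring earlier in \<pi> to the one occurring later. An update step swaps two adjacent
  non-neighbours and so fixes this orientation; hence it is constant on the classes [\<pi>]_Y.
  Rotating \<pi> left by 0 < t < n moves the first t entries behind the others, and since Y is
  connected some edge joins these two blocks: its orientation is reversed. So distinct rotations
  of \<pi> have distinct orientations and lie in distinct classes.\<close>

fun position :: "'a list \<Rightarrow> 'a \<Rightarrow> nat" where
  "position [] x = 0"
| "position (y # ys) x = (if y = x then 0 else Suc (position ys x))"

lemma position_less_length_iff: "position xs x < length xs \<longleftrightarrow> x \<in> set xs"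
  by (induction xs) auto

lemma nth_position: "x \<in> set xs \<Longrightarrow> xs ! position xs x = x"
  by (induction xs) auto

lemma position_notin: "x \<notin> set xs \<Longrightarrow> position xs x = length xs"
  by (induction xs) auto

lemma position_nth: "distinct xs \<Longrightarrow> i < length xs \<Longrightarrow> position xs (xs ! i) = i"
  by (induction xs arbitrary: i) (auto simp: nth_Cons nth_mem split: nat.split)

lemma length_perms_Y: "p \<in> perms_Y n \<Longrightarrow> length p = n"
  unfolding perms_Y_def using distinct_card by fastforce

lemma rotate_perms_Y: "p \<in> perms_Y n \<Longrightarrow> rotate s p \<in> perms_Y n"
  unfolding perms_Y_def by simp

definition transpose_adj :: "nat \<Rightarrow> nat \<Rightarrow> nat" where
  "transpose_adj k i = (if i = k then Suc k else if i = Suc k then k else i)"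

lemma transpose_adj_transpose_adj [simp]: "transpose_adj k (transpose_adj k i) = i"
  by (simp add: transpose_adj_def)

lemma nth_swap_adj:
  assumes "Suc k < length xs" "i < length xs"
  shows "swap_adj k xs ! i = xs ! transpose_adj k i"
  using assms by (auto simp: swap_adj_def nth_list_update transpose_adj_def)

lemma position_swap_adj:
  assumes "distinct xs" "Suc k < length xs"
  shows "position (swap_adj k xs) x = transpose_adj k (position xs x)"
proof (cases "x \<in> set xs")
  case True
  let ?i = "transpose_adj k (position xs x)"
  have "?i < length xs"
    using True assms(2) by (auto simp: transpose_adj_def position_less_length_iff)
  moreover have "swap_adj k xs ! ?i = x"
    using assms(2) True calculation by (simp add: nth_swap_adj nth_position)
  moreover have "distinct (swap_adj k xs)" "length (swap_adj k xs) = length xs"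
    using assms by (simp_all add: swap_adj_def distinct_swap)
  ultimately show ?thesis
    using position_nth[of "swap_adj k xs" ?i] by simp
next
  case False
  then show ?thesis
    using assms(2) by (simp add: position_notin swap_adj_def set_swap transpose_adj_def)
qed

lemma transpose_adj_less_iff:
  "{a, b} \<noteq> {k, Suc k} \<Longrightarrow>
     transpose_adj k a < transpose_adj k b \<longleftrightarrow> a < b"
  by (auto simp: transpose_adj_def doubleton_eq_iff)

definition orientation :: "'a set set \<Rightarrow> 'a list \<Rightarrow> ('a \<times> 'a) set" where
  "orientation E q = {(u, v). {u, v} \<in> E \<and> position q u < position q v}"

lemma orientation_swap_adj:
  assumes "distinct q" "Suc k < length q" "{q ! k, q ! Suc k} \<notin> E"
  shows "orientation E (swap_adj k q) = orientation E q"
proof -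
  have "{position q u, position q v} \<noteq> {k, Suc k}" if "{u, v} \<in> E" for u v
  proof
    assume positions: "{position q u, position q v} = {k, Suc k}"
    then have "position q u < length q" "position q v < length q"
      using assms(2) by (auto simp: doubleton_eq_iff)
    then have "q ! position q u = u" "q ! position q v = v"
      by (simp_all add: position_less_length_iff nth_position)
    then have "{u, v} = {q ! k, q ! Suc k}"
      using positions by (auto simp: doubleton_eq_iff)
    with that assms(3) show False by simp
  qed
  then show ?thesis
    unfolding orientation_def
    by (auto simp: position_swap_adj[OF assms(1,2)] transpose_adj_less_iff)
qed

lemma orientation_update_equiv:
  assumes "update_equiv n E p q"
  shows "orientation E p = orientation E q"
proof -
  have "orientation E p = orientation E q" if edge: "(p, q) \<in> update_edge n E" for p q
  proof -
    obtain k where "p \<in> perms_Y n" "Suc k < n" "{p ! k, p ! Suc k} \<notin> E" "q = swap_adj k p"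
      using edge unfolding update_edge_def by blast
    then show ?thesis
      using orientation_swap_adj[of p k E] length_perms_Y unfolding perms_Y_def by auto
  qed
  with assms show ?thesis
    unfolding update_equiv_def by (induction rule: rtrancl_induct) auto
qed

lemma rtrancl_leaves_set:
  assumes "(x, y) \<in> R\<^sup>*" "x \<in> A" "y \<notin> A"
  obtains u v where "(u, v) \<in> R" "u \<in> A" "v \<notin> A"
  using assms by (induction rule: rtrancl_induct) auto

lemma connected_edge_leaving_set:
  assumes "simple_graph n E" "graph_connected n E"
    and "a \<in> A" "A \<subseteq> {1..n}" "b \<in> {1..n} - A"
  obtains u v where "{u, v} \<in> E" "u \<in> A" "v \<in> {1..n} - A"
proof -
  have "(a, b) \<in> {(x, y). {x, y} \<in> E}\<^sup>*"
    using assms(2-5) unfolding graph_connected_def by blast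
  then obtain u v where uv: "{u, v} \<in> E" "u \<in> A" "v \<notin> A"
    using assms(3,5) by (elim rtrancl_leaves_set) auto
  moreover have "v \<in> {1..n}"
    using assms(1) uv(1) unfolding simple_graph_def by (fastforce simp: doubleton_eq_iff)
  ultimately show ?thesis using that by blast
qed

lemma position_rotate_nth:
  assumes "distinct q" "i < length q"
  shows "position (rotate t q) (q ! i) = (i + (length q - t mod length q)) mod length q"
proof -
  let ?n = "length q"
  let ?j = "(i + (?n - t mod ?n)) mod ?n"
  have n_pos: "0 < ?n" using assms(2) by linarith
  then have "t mod ?n < ?n" "t div ?n * ?n + t mod ?n = t"
    by simp_all
  then have shift: "t + (i + (?n - t mod ?n)) = i + ?n + t div ?n * ?n"
    by linarith
  have "(t + ?j) mod ?n = (t + (i + (?n - t mod ?n))) mod ?n"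
    by (simp add: mod_add_right_eq)
  also have "\<dots> = i"
    unfolding shift using assms(2) by simp
  finally have "(t + ?j) mod ?n = i" .
  moreover have j_less: "?j < ?n" using n_pos by simp
  ultimately have "rotate t q ! ?j = q ! i"
    by (simp add: nth_rotate)
  then show ?thesis
    using assms(1) j_less position_nth[of "rotate t q" ?j] by simp
qed

lemma rotate_reverses_order:
  assumes "distinct q" "i < t" "t \<le> j" "j < length q"
  shows "position (rotate t q) (q ! j) < position (rotate t q) (q ! i)"
proof -
  have "j + length q - t = (j - t) + length q"
    using assms(3,4) by simp
  then have "(j + length q - t) mod length q = j - t"
    using assms(3,4) by (metis mod_add_self2 mod_less less_imp_diff_less)
  then show ?thesis
    using assms by (simp add: position_rotate_nth)
qed

lemma orientation_rotate_ne:
  assumes "simple_graph n E" "graph_connected n E" "q \<in> perms_Y n" "0 < t" "t < n"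
  shows "orientation E (rotate t q) \<noteq> orientation E q"
proof -
  have q: "distinct q" "set q = {1..n}" "length q = n"
    using assms(3) length_perms_Y unfolding perms_Y_def by auto
  let ?A = "set (take t q)"
  have "q ! 0 \<in> ?A" using nth_mem[of 0 "take t q"] assms(4,5) q(3) by simp
  moreover have "?A \<subseteq> {1..n}" using q(2) by (metis set_take_subset)
  moreover have "q ! t \<in> {1..n} - ?A"
  proof -
    have "q ! t \<notin> ?A"
      using assms(5) q by (auto simp: in_set_conv_nth nth_eq_iff_index_eq)
    moreover have "q ! t \<in> set q" using assms(5) q(3) by simp
    ultimately show ?thesis using q(2) by simp
  qed
  ultimately obtain u v where uv: "{u, v} \<in> E" "u \<in> ?A" "v \<in> {1..n} - ?A"
    by (rule connected_edge_leaving_set[OF assms(1,2)])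
  obtain i where i: "i < t" "u = q ! i"
    using uv(2) assms(5) q(3) by (auto simp: in_set_conv_nth)
  obtain j where j: "j < n" "v = q ! j"
    using uv(3) q by (metis DiffD1 in_set_conv_nth)
  have "t \<le> j"
  proof (rule ccontr)
    assume "\<not> t \<le> j"
    then have "v \<in> ?A"
      using j assms(5) q(3) by (auto simp: in_set_conv_nth intro!: exI[of _ j])
    with uv(3) show False by simp
  qed
  have "(u, v) \<in> orientation E q"
    using uv(1) i j \<open>t \<le> j\<close> q assms(5) by (simp add: orientation_def position_nth)
  moreover have "(u, v) \<notin> orientation E (rotate t q)"
    using rotate_reverses_order[OF q(1) i(1) \<open>t \<le> j\<close>] i j q(3)
    by (simp add: orientation_def)
  ultimately show ?thesis by blast
qed

lemma update_class_rotate_ne: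
  assumes "simple_graph n E" "graph_connected n E" "p \<in> perms_Y n" "s < s'" "s' < n"
  shows "update_class n E (rotate s p) \<noteq> update_class n E (rotate s' p)"
proof
  assume classes_eq: "update_class n E (rotate s p) = update_class n E (rotate s' p)"
  have "rotate s' p \<in> update_class n E (rotate s' p)"
    using rotate_perms_Y[OF assms(3)] unfolding update_class_def update_equiv_def by simp
  then have "update_equiv n E (rotate s p) (rotate s' p)"
    using classes_eq unfolding update_class_def by blast
  moreover have "rotate s' p = rotate (s' - s) (rotate s p)"
    using assms(4) by (simp add: rotate_rotate)
  ultimately have "update_equiv n E (rotate s p) (rotate (s' - s) (rotate s p))"
    by simp
  then have "orientation E (rotate (s' - s) (rotate s p)) = orientation E (rotate s p)"
    by (simp add: orientation_update_equiv)
  then show False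
    using orientation_rotate_ne[OF assms(1,2) rotate_perms_Y[OF assms(3)]] assms(4,5) by simp
qed

theorem proposition1:
  fixes n :: nat and E :: "nat set set" and p :: "nat list" and s s' :: nat
  assumes "simple_graph n E"
    and "graph_connected n E"
    and "p \<in> perms_Y n"
    and "s < n" and "s' < n" and "s \<noteq> s'"
  shows "update_class n E (sigma_shift s p) \<noteq> update_class n E (sigma_shift s' p)"
  using update_class_rotate_ne[OF assms(1-3)] assms(4-6)
  unfolding sigma_shift_def by (metis linorder_neq_iff)

end
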